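(* Let $X$ be a connected, locally connected, Hausdorff, normal, first countable topological space, $V$ a finite dimensional Euclidean vector space, and $f:X\to V$ a continuous closed map that has local convexity data and is locally fiber connected. Then $\tilde f:X_f\to V$ is a proper map, and for every $[x]\in X_f$ and $r>0$ the closed ball $B_r([x]):=\{[y]\in X_f\mid d([x],[y])\le r\}$ is compact.
   Context: A subset $C\subset V$ is a cone with vertex $v_0$ if $v_0\in C$ and $(1-\lambda)v_0+\lambda v\in C$ for every $\lambda\ge 0$ and every $v\in C$, $v\ne v_0$; it is a convex cone if it is moreover convex. A continuous map $f:X\to V$ has local convexity data if for each $x\in X$ and every sufficiently small open neighborhood $U_x$ of $x$ there is a convex cone $C_x\subset V$ with vertex $f(x)$, endowed with the subspace topology from $V$, such that (VN) $f(U_x)\subset C_x$ and $f(U_x)$ is a neighborhood of $f(x)$ in $C_x$; and (SLO) $f|_{U_x}:U_x\to C_x$ is an open map, and for every neighborhood $U'_x\subset U_x$ of $x$ the set $f(U'_x)$ is a neighborhood of $f(x)$ in $C_x$. A subset $A\subset X$ satisfies condition (LFC) if for every $a\in A$, the set $A$ does not intersect two different connected components of the fiber $f^{-1}(f(a))$. The map $f$ is locally fiber connected if for every $x\in X$, every open neighborhood of $x$ contains a neighborhood $U_x$ of $x$ satisfying (LFC). Declare $x\sim y$ in $X$ iff $f(x)=f(y)$ and $x,y$ lie in the same connected component of $f^{-1}(f(x))$; $X_f:=X/\!\sim$ with the quotient topology, $\pi_f:X\to X_f$ is the projection and $\tilde f:X_f\to V$ is the unique map with $\tilde f\circ\pi_f=f$.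 The distance $d$ on $X_f$: $d([x],[y])$ is the infimum of the lengths $l(\tilde f\circ\gamma)$, measured with the Euclidean distance of $V$, over all continuous curves $\gamma:[a,b]\to X_f$ with $\gamma(a)=[x]$, $\gamma(b)=[y]$. A continuous map between Hausdorff spaces is proper if it is closed and all its fibers are compact. *)

theory Defs
  imports "HOL-Analysis.Analysis"
begin

definition cone_with_vertex :: "'b::real_vector set \<Rightarrow> 'b \<Rightarrow> bool" where
  "cone_with_vertex C v0 \<longleftrightarrow> v0 \<in> C \<and>
     (\<forall>v\<in>C. \<forall>t::real. v \<noteq> v0 \<and> t \<ge> 0 \<longrightarrow> (1 - t) *\<^sub>R v0 + t *\<^sub>R v \<in> C)"

definition convex_cone_with_vertex :: "'b::real_vector set \<Rightarrow> 'b \<Rightarrow> bool" where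
  "convex_cone_with_vertex C v0 \<longleftrightarrow> cone_with_vertex C v0 \<and> convex C"

definition nbhd_in :: "'a topology \<Rightarrow> 'a \<Rightarrow> 'a set \<Rightarrow> bool" where
  "nbhd_in X x N \<longleftrightarrow> N \<subseteq> topspace X \<and> (\<exists>G. openin X G \<and> x \<in> G \<and> G \<subseteq> N)"

definition local_convexity_data :: "'a topology \<Rightarrow> ('a \<Rightarrow> 'b::euclidean_space) \<Rightarrow> bool" where
  "local_convexity_data X f \<longleftrightarrow>
    (\<forall>x\<in>topspace X. \<exists>W. openin X W \<and> x \<in> W \<and>
      (\<forall>U. openin X U \<and> x \<in> U \<and> U \<subseteq> W \<longrightarrow>
        (\<exists>C. convex_cone_with_vertex C (f x) \<and>
             \<comment> \<open>(VN)\<close>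
             f ` U \<subseteq> C \<and> nbhd_in (top_of_set C) (f x) (f ` U) \<and>
             \<comment> \<open>(SLO)\<close>
             open_map (subtopology X U) (top_of_set C) f \<and>
             (\<forall>U'. nbhd_in X x U' \<and> U' \<subseteq> U \<longrightarrow> nbhd_in (top_of_set C) (f x) (f ` U')))))"

definition fiber :: "'a topology \<Rightarrow> ('a \<Rightarrow> 'b) \<Rightarrow> 'a \<Rightarrow> 'a set" where
  "fiber X f a = {y \<in> topspace X. f y = f a}"

definition LFC :: "'a topology \<Rightarrow> ('a \<Rightarrow> 'b) \<Rightarrow> 'a set \<Rightarrow> bool" where
  "LFC X f A \<longleftrightarrow> (\<forall>a\<in>A. \<forall>y\<in>A. \<forall>z\<in>A. y \<in> fiber X f a \<and> z \<in> fiber X f a \<longrightarrow>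
       connected_component_of (subtopology X (fiber X f a)) y z)"

definition locally_fiber_connected :: "'a topology \<Rightarrow> ('a \<Rightarrow> 'b) \<Rightarrow> bool" where
  "locally_fiber_connected X f \<longleftrightarrow>
    (\<forall>x\<in>topspace X. \<forall>W. openin X W \<and> x \<in> W \<longrightarrow>
       (\<exists>U. nbhd_in X x U \<and> U \<subseteq> W \<and> LFC X f U))"

(* the projection pi_f: x \<mapsto> [x], the connected component of x in its fiber *)
definition fclass :: "'a topology \<Rightarrow> ('a \<Rightarrow> 'b) \<Rightarrow> 'a \<Rightarrow> 'a set" where
  "fclass X f x = connected_component_of_set (subtopology X (fiber X f x)) x"

definition Xf_top :: "'a topology \<Rightarrow> ('a \<Rightarrow> 'b) \<Rightarrow> 'a set topology" where
  "Xf_top X f = topology (\<lambda>U. U \<subseteq> fclass X f ` topspace X \<and>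
                               openin X {x \<in> topspace X. fclass X f x \<in> U})"

lemma istopology_Xf:
  "istopology (\<lambda>U. U \<subseteq> fclass X f ` topspace X \<and>
                               openin X {x \<in> topspace X. fclass X f x \<in> U})"
proof -
  have 1: "{x \<in> topspace X. fclass X f x \<in> S \<inter> T} =
           {x \<in> topspace X. fclass X f x \<in> S} \<inter> {x \<in> topspace X. fclass X f x \<in> T}" for S T
    by auto
  have 2: "{x \<in> topspace X. fclass X f x \<in> \<Union>K} =
           \<Union>((\<lambda>S. {x \<in> topspace X. fclass X f x \<in> S}) ` K)" for K
    by auto
  show ?thesis unfolding istopology_def
    apply (intro conjI allI impI)
    subgoal by blast
    subgoal for S T unfolding 1 by (intro openin_Int) simp_all
    subgoal by blast
    subgoal for K unfolding 2 by (intro openin_Union) auto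
    done
qed

lemma openin_Xf_top:
  "openin (Xf_top X f) U \<longleftrightarrow> U \<subseteq> fclass X f ` topspace X \<and>
                               openin X {x \<in> topspace X. fclass X f x \<in> U}"
  unfolding Xf_top_def topology_inverse'[OF istopology_Xf] ..

definition ftilde :: "('a \<Rightarrow> 'b) \<Rightarrow> 'a set \<Rightarrow> 'b" where
  "ftilde f c = f (SOME x. x \<in> c)"

definition curve_length :: "(real \<Rightarrow> 'b::metric_space) \<Rightarrow> real \<Rightarrow> real \<Rightarrow> ereal" where
  "curve_length g a b =
     (SUP t \<in> {t. t \<noteq> [] \<and> sorted t \<and> hd t = a \<and> last t = b}.
        ereal (\<Sum>i<length t - 1. dist (g (t ! i)) (g (t ! Suc i))))"

(* the distance d on X_f (value \<infinity> if no curve of finite length exists) *)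
definition Xf_dist :: "'a topology \<Rightarrow> ('a \<Rightarrow> 'b::euclidean_space) \<Rightarrow> 'a set \<Rightarrow> 'a set \<Rightarrow> ereal" where
  "Xf_dist X f p q =
     (INF (\<gamma>, a, b) \<in> {(\<gamma>, a, b). a \<le> b \<and>
            continuous_map (top_of_set {a..b}) (Xf_top X f) \<gamma> \<and> \<gamma> a = p \<and> \<gamma> b = q}.
        curve_length (ftilde f \<circ> \<gamma>) a b)"

end

theory Submission
  imports Defs
begin

(*
  The map ftilde is continuous and closed because f is, so properness amounts to finiteness of
  its fibres. A fibre of ftilde is the set of components of a fibre of f, and by (LFC) every point
  of X has a neighbourhood meeting at most one of them; representatives of infinitely many
  components would thus form a closed discrete sequence s. An open map onto a convex set is
  constant near a point only if the set is a single point, so (SLO) and connectedness make f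
  nowhere locally constant. Tietze gives a continuous g with g (s n) = n, and moving each s n
  slightly off its fibre gives another closed discrete sequence whose image under the closed
  map f accumulates at f (s n) without reaching it.

  The ball of radius r around [x] lies in the preimage under ftilde of the closed Euclidean ball
  of radius r around f x, which is compact by properness, so it suffices that it is closed. Near
  a point w, (VN), (SLO) and (LFC) let the segment from f u to f w be lifted to a curve in X_f, so
  d(p, [w]) \<le> d(p, [u]) + |f u - f w| for u close to w; hence the complement of the ball is open.
*)

section \<open>The quotient space X_f\<close>

lemma fclass_subset_fiber: "fclass X f x \<subseteq> fiber X f x"
  unfolding fclass_def using connected_component_of_subset_topspace by fastforce

lemma fclass_self: "x \<in> topspace X \<Longrightarrow> x \<in> fclass X f x"
  unfolding fclass_def fiber_def by (simp add: connected_component_of_refl)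

lemma ftilde_fclass:
  assumes "x \<in> topspace X"
  shows "ftilde f (fclass X f x) = f x"
proof -
  have "(SOME y. y \<in> fclass X f x) \<in> fclass X f x"
    using fclass_self[OF assms] by (rule someI)
  then have "(SOME y. y \<in> fclass X f x) \<in> fiber X f x"
    by (rule subsetD[OF fclass_subset_fiber])
  then show ?thesis
    unfolding ftilde_def fiber_def by simp
qed

lemma topspace_Xf_top: "topspace (Xf_top X f) = fclass X f ` topspace X"
proof (rule subset_antisym)
  show "topspace (Xf_top X f) \<subseteq> fclass X f ` topspace X"
    using openin_topspace[of "Xf_top X f"] unfolding openin_Xf_top by blast
  have "{x \<in> topspace X. fclass X f x \<in> fclass X f ` topspace X} = topspace X"
    by auto
  then have "openin (Xf_top X f) (fclass X f ` topspace X)"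
    unfolding openin_Xf_top by simp
  then show "fclass X f ` topspace X \<subseteq> topspace (Xf_top X f)"
    by (rule openin_subset)
qed

lemma continuous_map_fclass: "continuous_map X (Xf_top X f) (fclass X f)"
  unfolding continuous_map_def topspace_Xf_top openin_Xf_top by auto

lemma continuous_map_ftilde:
  assumes "continuous_map X euclidean f"
  shows "continuous_map (Xf_top X f) euclidean (ftilde f)"
proof -
  have "{x \<in> topspace X. fclass X f x \<in> {c \<in> topspace (Xf_top X f). ftilde f c \<in> U}}
        = {x \<in> topspace X. f x \<in> U}" for U
    by (auto simp: topspace_Xf_top ftilde_fclass)
  then show ?thesis
    using assms unfolding continuous_map_def openin_Xf_top by (auto simp: topspace_Xf_top)
qed

lemma image_ftilde:
  assumes "A \<subseteq> topspace (Xf_top X f)"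
  shows "ftilde f ` A = f ` {x \<in> topspace X. fclass X f x \<in> A}"
  using assms unfolding topspace_Xf_top by (force simp: ftilde_fclass)

lemma closed_map_ftilde:
  assumes "closed_map X euclidean f"
  shows "closed_map (Xf_top X f) euclidean (ftilde f)"
  unfolding closed_map_def
proof (intro allI impI)
  fix A assume A: "closedin (Xf_top X f) A"
  then have "closedin X {x \<in> topspace X. fclass X f x \<in> A}"
    by (rule closedin_continuous_map_preimage[OF continuous_map_fclass])
  then show "closedin euclidean (ftilde f ` A)"
    using assms closedin_subset[OF A] by (simp add: closed_map_def image_ftilde)
qed

lemma fiber_ftilde:
  "{c \<in> topspace (Xf_top X f). ftilde f c = y} = fclass X f ` {x \<in> topspace X. f x = y}"
  unfolding topspace_Xf_top by (force simp: ftilde_fclass)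

section \<open>Finiteness of the fibres of ftilde\<close>

lemma LFC_subset: "LFC X f U \<Longrightarrow> A \<subseteq> U \<Longrightarrow> LFC X f A"
  unfolding LFC_def by blast

lemma fclass_eq_if_LFC:
  assumes "LFC X f U" "U \<subseteq> topspace X" "y \<in> U" "z \<in> U" "f y = f z"
  shows "fclass X f y = fclass X f z"
proof -
  have fib: "y \<in> fiber X f y" "z \<in> fiber X f y" "fiber X f z = fiber X f y"
    using assms(2-5) unfolding fiber_def by auto
  have "connected_component_of (subtopology X (fiber X f y)) y z"
    using assms(1) fib(1,2) assms(3,4) unfolding LFC_def by simp
  then have "connected_component_of (subtopology X (fiber X f y)) y
           = connected_component_of (subtopology X (fiber X f y)) z"
    using connected_component_of_equiv by metis
  then show ?thesis
    unfolding fclass_def fib(3) by simp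
qed

lemma local_convexity_chartE:
  assumes "local_convexity_data X f" "x \<in> topspace X" "openin X V" "x \<in> V"
  obtains U C where "openin X U" "x \<in> U" "U \<subseteq> V" "convex C" "f ` U \<subseteq> C"
    "nbhd_in (top_of_set C) (f x) (f ` U)" "open_map (subtopology X U) (top_of_set C) f"
proof -
  obtain W where W: "openin X W" "x \<in> W" and chart:
    "\<And>U. openin X U \<Longrightarrow> x \<in> U \<Longrightarrow> U \<subseteq> W \<Longrightarrow> \<exists>C. convex_cone_with_vertex C (f x) \<and>
       f ` U \<subseteq> C \<and> nbhd_in (top_of_set C) (f x) (f ` U) \<and>
       open_map (subtopology X U) (top_of_set C) f"
    using assms(1,2) unfolding local_convexity_data_def by meson
  have U: "openin X (V \<inter> W)" "x \<in> V \<inter> W" "V \<inter> W \<subseteq> V"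
    using assms(3,4) W by auto
  obtain C where C: "convex_cone_with_vertex C (f x)" "f ` (V \<inter> W) \<subseteq> C"
    "nbhd_in (top_of_set C) (f x) (f ` (V \<inter> W))"
    "open_map (subtopology X (V \<inter> W)) (top_of_set C) f"
    using chart[OF U(1,2)] by blast
  have "convex C"
    using C(1) unfolding convex_cone_with_vertex_def by blast
  from that[OF U this C(2-4)] show ?thesis .
qed

lemma LFC_nbhdE:
  assumes "locally_fiber_connected X f" "x \<in> topspace X"
  obtains G where "openin X G" "x \<in> G" "LFC X f G"
proof -
  obtain V where "nbhd_in X x V" "LFC X f V"
    using assms unfolding locally_fiber_connected_def by blast
  with that show ?thesis
    unfolding nbhd_in_def by (meson LFC_subset)
qed

lemma local_convexity_LFC_chartE:
  assumes "local_convexity_data X f" "locally_fiber_connected X f" "x \<in> topspace X"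
  obtains U C where "openin X U" "x \<in> U" "LFC X f U" "convex C" "f ` U \<subseteq> C"
    "nbhd_in (top_of_set C) (f x) (f ` U)" "open_map (subtopology X U) (top_of_set C) f"
proof -
  obtain G where G: "openin X G" "x \<in> G" "LFC X f G"
    using assms(2,3) by (rule LFC_nbhdE)
  obtain U C where "openin X U" "x \<in> U" "U \<subseteq> G" "convex C" "f ` U \<subseteq> C"
    "nbhd_in (top_of_set C) (f x) (f ` U)" "open_map (subtopology X U) (top_of_set C) f"
    using local_convexity_chartE[OF assms(1,3) G(1,2)] .
  with LFC_subset[OF G(3)] that show ?thesis
    by blast
qed

definition locally_constant_at :: "'a topology \<Rightarrow> ('a \<Rightarrow> 'b) \<Rightarrow> 'a \<Rightarrow> bool" where
  "locally_constant_at X f x \<longleftrightarrow> (\<exists>N. openin X N \<and> x \<in> N \<and> (\<forall>z\<in>N. f z = f x))"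

lemma openin_locally_constant_at: "openin X {x \<in> topspace X. locally_constant_at X f x}"
proof (subst openin_subopen, intro ballI)
  fix x assume "x \<in> {x \<in> topspace X. locally_constant_at X f x}"
  then obtain N where N: "openin X N" "x \<in> N" "\<forall>z\<in>N. f z = f x"
    unfolding locally_constant_at_def by blast
  have "N \<subseteq> {x \<in> topspace X. locally_constant_at X f x}"
  proof
    fix z assume "z \<in> N"
    then have "z \<in> topspace X" "\<forall>w\<in>N. f w = f z"
      using openin_subset[OF N(1)] N(3) by (blast, metis)
    with N(1) \<open>z \<in> N\<close> show "z \<in> {x \<in> topspace X. locally_constant_at X f x}"
      unfolding locally_constant_at_def by blast
  qed
  with N(1,2) show "\<exists>T. openin X T \<and> x \<in> T \<and> T \<subseteq> {x \<in> topspace X. locally_constant_at X f x}"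
    by blast
qed

lemma connected_space_locally_constant_imp_constant:
  assumes "connected_space X" "\<And>x. x \<in> topspace X \<Longrightarrow> locally_constant_at X f x"
    and "x \<in> topspace X" "y \<in> topspace X"
  shows "f y = f x"
proof -
  have level_open: "openin X {z \<in> topspace X. P (f z)}" for P
  proof (subst openin_subopen, intro ballI)
    fix z assume z: "z \<in> {z \<in> topspace X. P (f z)}"
    then obtain N where N: "openin X N" "z \<in> N" "\<forall>w\<in>N. f w = f z"
      using assms(2) unfolding locally_constant_at_def by blast
    then have "N \<subseteq> {z \<in> topspace X. P (f z)}"
      using openin_subset[OF N(1)] z by (metis (mono_tags, lifting) mem_Collect_eq subsetI subsetD)
    with N show "\<exists>T. openin X T \<and> z \<in> T \<and> T \<subseteq> {z \<in> topspace X. P (f z)}"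
      by blast
  qed
  have "topspace X - {z \<in> topspace X. f z = f x} = {z \<in> topspace X. f z \<noteq> f x}"
    by blast
  then have "closedin X {z \<in> topspace X. f z = f x}"
    using level_open[of "\<lambda>c. c \<noteq> f x"] unfolding closedin_def by simp
  then have "{z \<in> topspace X. f z = f x} = topspace X"
    using assms(1,3) level_open[of "\<lambda>c. c = f x"] unfolding connected_space_clopen_in by blast
  then show ?thesis
    using assms(4) by blast
qed

lemma convex_eq_singleton_if_openin:
  fixes C :: "'a::real_normed_vector set"
  assumes "convex C" "openin (top_of_set C) {a}"
  shows "C = {a}"
proof -
  have "a \<in> C"
    using openin_subset[OF assms(2)] by simp
  then have "closedin (top_of_set C) {a}"
    by simp
  then show ?thesis
    using assms convex_connected[OF assms(1)] unfolding connected_clopen by blast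
qed

lemma closedin_locally_constant_at:
  assumes "local_convexity_data X f"
  shows "closedin X {x \<in> topspace X. locally_constant_at X f x}" (is "closedin X ?S")
proof -
  have "X closure_of ?S \<subseteq> ?S"
  proof
    fix y assume y: "y \<in> X closure_of ?S"
    then have yX: "y \<in> topspace X"
      by (simp add: in_closure_of)
    obtain U C where U: "openin X U" "y \<in> U" "convex C" "f ` U \<subseteq> C"
      "open_map (subtopology X U) (top_of_set C) f"
      using local_convexity_chartE[OF assms yX openin_topspace yX] by metis
    obtain s M where sM: "s \<in> U" "openin X M" "s \<in> M" "\<forall>z\<in>M. f z = f s"
      using y U(1,2) unfolding in_closure_of locally_constant_at_def by blast
    have "f ` (U \<inter> M) = {f s}"
      using sM by blast
    moreover have "openin (top_of_set C) (f ` (U \<inter> M))"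
      using U(5) openin_subtopology_Int2[OF sM(2)] unfolding open_map_def by blast
    ultimately have "C = {f s}"
      using convex_eq_singleton_if_openin[OF U(3)] by simp
    then have "\<forall>z\<in>U. f z = f s"
      using U(4) by (simp add: image_subset_iff)
    then have "\<forall>z\<in>U. f z = f y"
      using U(2) by metis
    with U(1,2) yX show "y \<in> ?S"
      unfolding locally_constant_at_def by blast
  qed
  then show ?thesis
    using closure_of_subset_eq[of ?S X] by blast
qed

lemma locally_constant_at_imp_constant:
  assumes "connected_space X" "local_convexity_data X f"
    and "locally_constant_at X f x" "x \<in> topspace X" "y \<in> topspace X"
  shows "f y = f x"
proof -
  have "{x \<in> topspace X. locally_constant_at X f x} = topspace X"
    using assms(1,3,4) openin_locally_constant_at closedin_locally_constant_at[OF assms(2)]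
    unfolding connected_space_clopen_in by blast
  then show ?thesis
    using connected_space_locally_constant_imp_constant[OF assms(1) _ assms(4,5)] by blast
qed

definition sparse_seq :: "'a topology \<Rightarrow> (nat \<Rightarrow> 'a) \<Rightarrow> bool" where
  "sparse_seq X s \<longleftrightarrow> range s \<subseteq> topspace X \<and>
     (\<forall>w\<in>topspace X. \<exists>G. openin X G \<and> w \<in> G \<and> (\<forall>m n. s m \<in> G \<longrightarrow> s n \<in> G \<longrightarrow> m = n))"

lemma sparse_seqE:
  assumes "sparse_seq X s" "w \<in> topspace X"
  obtains G where "openin X G" "w \<in> G" "\<forall>m n. s m \<in> G \<longrightarrow> s n \<in> G \<longrightarrow> m = n"
  using assms unfolding sparse_seq_def by metis

lemma sparse_seq_inj: "sparse_seq X s \<Longrightarrow> inj s"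
  unfolding sparse_seq_def inj_def by (metis rangeI subsetD)

lemma closedin_range_sparse_seq:
  assumes "t1_space X" "sparse_seq X s"
  shows "closedin X (range s)"
proof -
  have "w \<in> range s" if w: "w \<in> X closure_of range s" for w
  proof (rule ccontr)
    assume notin: "w \<notin> range s"
    have wX: "w \<in> topspace X"
      using w by (simp add: in_closure_of)
    obtain G where G: "openin X G" "w \<in> G" "\<forall>m n. s m \<in> G \<longrightarrow> s n \<in> G \<longrightarrow> m = n"
      by (rule sparse_seqE[OF assms(2) wX])
    obtain n where n: "s n \<in> G"
      using w G(1,2) unfolding in_closure_of by blast
    have "s n \<in> topspace X" "w \<noteq> s n"
      using assms(2) notin unfolding sparse_seq_def by auto
    then obtain V where V: "openin X V" "w \<in> V" "s n \<notin> V"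
      using assms(1) wX unfolding t1_space_def by blast
    obtain m where "s m \<in> G \<inter> V"
      using w openin_Int[OF G(1) V(1)] G(2) V(2) unfolding in_closure_of by blast
    with G(3) n V(3) show False
      by blast
  qed
  then show ?thesis
    using assms(2) closure_of_subset_eq[of "range s" X] unfolding sparse_seq_def by blast
qed

lemma sparse_seq_continuous_index:
  assumes "normal_space X" "t1_space X" "sparse_seq X s"
  shows "\<exists>g :: 'a \<Rightarrow> real. continuous_map X euclideanreal g \<and> (\<forall>n. g (s n) = real n)"
proof -
  have "openin (subtopology X (range s)) {s n}" for n
  proof -
    have "s n \<in> topspace X"
      using assms(3) unfolding sparse_seq_def by blast
    then obtain G where G: "openin X G" "s n \<in> G" "\<forall>m k. s m \<in> G \<longrightarrow> s k \<in> G \<longrightarrow> m = k"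
      by (rule sparse_seqE[OF assms(3)])
    then have "range s \<inter> G = {s n}"
      by blast
    with openin_subtopology_Int2[OF G(1)] show ?thesis
      by metis
  qed
  then have "discrete_topology (range s) = subtopology X (range s)"
    using assms(3) unfolding discrete_topology_unique sparse_seq_def
    by (auto simp: topspace_subtopology)
  moreover have "continuous_map (discrete_topology (range s)) euclideanreal (\<lambda>z. real (inv s z))"
    by simp
  ultimately have "continuous_map (subtopology X (range s)) euclideanreal (\<lambda>z. real (inv s z))"
    by simp
  then obtain g :: "'a \<Rightarrow> real" where
    "continuous_map X euclideanreal g" "\<forall>z\<in>range s. g z = real (inv s z)"
    using assms(1) closedin_range_sparse_seq[OF assms(2,3)] unfolding normal_space_iff_Tietze by blast
  then show ?thesis
    using sparse_seq_inj[OF assms(3)] by auto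
qed

lemma sparse_seq_if_index_close:
  assumes "continuous_map X euclideanreal g" "range t \<subseteq> topspace X" "\<And>n. \<bar>real n - g (t n)\<bar> < 1/4"
  shows "sparse_seq X t"
  unfolding sparse_seq_def
proof (intro conjI ballI)
  fix w assume w: "w \<in> topspace X"
  define G where "G = {z \<in> topspace X. g z \<in> ball (g w) (1/4)}"
  have "openin X G"
    unfolding G_def using assms(1) by (intro openin_continuous_map_preimage) auto
  moreover have "w \<in> G"
    using w unfolding G_def by simp
  moreover have "m = n" if "t m \<in> G" "t n \<in> G" for m n
  proof -
    have "\<bar>g w - g (t m)\<bar> < 1/4" "\<bar>g w - g (t n)\<bar> < 1/4"
      using that unfolding G_def by (auto simp: dist_real_def)
    then have "\<bar>real m - real n\<bar> < 1"
      using assms(3)[of m] assms(3)[of n] by linarith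
    then have "\<not> m < n" "\<not> n < m"
      using nat_less_real_le[of m n] nat_less_real_le[of n m] by linarith+
    then show "m = n"
      by simp
  qed
  ultimately show "\<exists>G. openin X G \<and> w \<in> G \<and> (\<forall>m n. t m \<in> G \<longrightarrow> t n \<in> G \<longrightarrow> m = n)"
    by blast
qed (use assms(2) in blast)

lemma closed_map_level_set_not_sparse:
  fixes f :: "'a \<Rightarrow> 'b::metric_space"
  assumes "normal_space X" "t1_space X" "continuous_map X euclidean f" "closed_map X euclidean f"
    and "\<And>x. x \<in> topspace X \<Longrightarrow> \<not> locally_constant_at X f x"
    and "sparse_seq X s" "\<And>n. f (s n) = v"
  shows False
proof -
  obtain g :: "'a \<Rightarrow> real" where g: "continuous_map X euclideanreal g" "\<And>n. g (s n) = real n"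
    using sparse_seq_continuous_index[OF assms(1,2,6)] by blast
  \<comment> \<open>t n will be a point off the level set with f (t n) close to v and g (t n) close to n\<close>
  define N where "N n = {z \<in> topspace X. g z \<in> ball (real n) (1/4)}
                      \<inter> {z \<in> topspace X. f z \<in> ball v (inverse (real (Suc n)))}" for n
  have "\<exists>z\<in>N n. f z \<noteq> v" for n
  proof -
    have "openin X (N n)"
      unfolding N_def using g(1) assms(3)
      by (intro openin_Int openin_continuous_map_preimage) auto
    moreover have "s n \<in> N n" "s n \<in> topspace X"
      using assms(6,7) g(2) unfolding N_def sparse_seq_def by auto
    ultimately have "\<not> (\<forall>z\<in>N n. f z = f (s n))"
      using assms(5) unfolding locally_constant_at_def by blast
    then show ?thesis
      using assms(7) by simp
  qed
  then obtain t where t: "\<And>n. t n \<in> N n" "\<And>n. f (t n) \<noteq> v"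
    by metis
  then have "sparse_seq X t"
    using g(1) unfolding N_def by (intro sparse_seq_if_index_close) (auto simp: dist_real_def)
  then have closed: "closed (f ` range t)"
    using assms(4) closedin_range_sparse_seq[OF assms(2)] unfolding closed_map_def by simp
  have "(\<lambda>n. f (t n)) \<longlonglongrightarrow> v"
  proof -
    have close: "dist (f (t n)) v \<le> inverse (real (Suc n))" for n
      using t(1)[of n] unfolding N_def by (simp add: dist_commute)
    have "(\<lambda>n. dist (f (t n)) v) \<longlonglongrightarrow> 0"
      by (rule Lim_null_comparison[OF always_eventually LIMSEQ_inverse_real_of_nat]) (use close in simp)
    then show ?thesis
      by (rule tendsto_dist_iff[THEN iffD2])
  qed
  then have "v \<in> f ` range t"
    by (rule closed_sequentially[OF closed, rotated]) simp
  with t(2) show False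
    by auto
qed

lemma sparse_seq_if_inj_fclass:
  assumes "locally_fiber_connected X f" "range s \<subseteq> topspace X" "\<And>n. f (s n) = v"
    and "inj (\<lambda>n. fclass X f (s n))"
  shows "sparse_seq X s"
  unfolding sparse_seq_def
proof (intro conjI ballI)
  fix w assume "w \<in> topspace X"
  with assms(1) obtain U where U: "openin X U" "w \<in> U" "LFC X f U"
    by (rule LFC_nbhdE)
  have "m = n" if "s m \<in> U" "s n \<in> U" for m n
  proof -
    have "fclass X f (s m) = fclass X f (s n)"
      using fclass_eq_if_LFC[OF U(3) openin_subset[OF U(1)] that] assms(3) by simp
    with assms(4) show ?thesis
      unfolding inj_def by blast
  qed
  with U(1,2) show "\<exists>G. openin X G \<and> w \<in> G \<and> (\<forall>m n. s m \<in> G \<longrightarrow> s n \<in> G \<longrightarrow> m = n)"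
    by blast
qed (rule assms(2))

lemma finite_fclass_level_set:
  assumes "connected_space X" "Hausdorff_space X" "normal_space X"
    and "continuous_map X euclidean f" "closed_map X euclidean f"
    and "local_convexity_data X f" "locally_fiber_connected X f"
  shows "finite (fclass X f ` {x \<in> topspace X. f x = v})"
proof (cases "\<exists>x\<in>topspace X. locally_constant_at X f x")
  case True
  then obtain x where "x \<in> topspace X" "locally_constant_at X f x"
    by blast
  then have "f y = f x" if "y \<in> topspace X" for y
    using locally_constant_at_imp_constant[OF assms(1,6)] that by blast
  then have "fiber X f y = topspace X" if "y \<in> topspace X" for y
    using that unfolding fiber_def by auto
  then have "fclass X f y = topspace X" if "y \<in> topspace X" for y
    using that assms(1) unfolding fclass_def connected_space_connected_component_set by simp
  then have "fclass X f ` {x \<in> topspace X. f x = v} \<subseteq> {topspace X}"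
    by auto
  then show ?thesis
    by (rule finite_subset) simp
next
  case False
  show ?thesis
  proof (rule ccontr)
    assume "infinite (fclass X f ` {x \<in> topspace X. f x = v})"
    then obtain h :: "nat \<Rightarrow> 'a set" where h: "inj h" "range h \<subseteq> fclass X f ` {x \<in> topspace X. f x = v}"
      using infinite_countable_subset by blast
    then have "\<forall>n. \<exists>x. x \<in> topspace X \<and> f x = v \<and> fclass X f x = h n"
      by blast
    then obtain s where s: "\<And>n. s n \<in> topspace X" "\<And>n. f (s n) = v" "\<And>n. fclass X f (s n) = h n"
      by metis
    have "sparse_seq X s"
      by (rule sparse_seq_if_inj_fclass[OF assms(7) _ s(2)]) (use s(1,3) h(1) in auto)
    with False show False
      using closed_map_level_set_not_sparse[OF assms(3) Hausdorff_imp_t1_space[OF assms(2)] assms(4,5)]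
        s(2) by blast
  qed
qed

lemma proper_map_ftilde:
  assumes "connected_space X" "Hausdorff_space X" "normal_space X"
    and "continuous_map X euclidean f" "closed_map X euclidean f"
    and "local_convexity_data X f" "locally_fiber_connected X f"
  shows "proper_map (Xf_top X f) euclidean (ftilde f)"
  unfolding proper_map_def
proof (intro conjI ballI)
  show "closed_map (Xf_top X f) euclidean (ftilde f)"
    using assms(5) by (rule closed_map_ftilde)
  fix v
  have "finite {c \<in> topspace (Xf_top X f). ftilde f c = v}"
    unfolding fiber_ftilde using finite_fclass_level_set[OF assms] .
  then show "compactin (Xf_top X f) {c \<in> topspace (Xf_top X f). ftilde f c = v}"
    by (intro finite_imp_compactin) auto
qed

section \<open>Lengths of curves\<close>

fun inscribed_length :: "(real \<Rightarrow> 'b::metric_space) \<Rightarrow> real list \<Rightarrow> real" where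
  "inscribed_length g (x # y # ts) = dist (g x) (g y) + inscribed_length g (y # ts)"
| "inscribed_length g _ = 0"

definition subdivisions :: "real \<Rightarrow> real \<Rightarrow> real list set" where
  "subdivisions a b = {t. t \<noteq> [] \<and> sorted t \<and> hd t = a \<and> last t = b}"

lemma inscribed_length_eq_sum:
  "(\<Sum>i<length t - 1. dist (g (t ! i)) (g (t ! Suc i))) = inscribed_length g t"
proof (induction g t rule: inscribed_length.induct)
  case (1 g x y ts)
  have "(\<Sum>i<length (x # y # ts) - 1. dist (g ((x # y # ts) ! i)) (g ((x # y # ts) ! Suc i)))
      = dist (g x) (g y) + (\<Sum>i<length (y # ts) - 1. dist (g ((y # ts) ! i)) (g ((y # ts) ! Suc i)))"
    by (simp add: sum.lessThan_Suc_shift del: sum.lessThan_Suc)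
  with "1.IH" show ?case
    by simp
qed simp_all

lemma curve_length_eq_SUP:
  "curve_length g a b = (SUP t \<in> subdivisions a b. ereal (inscribed_length g t))"
  unfolding curve_length_def subdivisions_def inscribed_length_eq_sum ..

lemma inscribed_length_le_curve_length:
  "t \<in> subdivisions a b \<Longrightarrow> ereal (inscribed_length g t) \<le> curve_length g a b"
  unfolding curve_length_eq_SUP by (rule SUP_upper)

lemma curve_length_least:
  "(\<And>t. t \<in> subdivisions a b \<Longrightarrow> ereal (inscribed_length g t) \<le> L) \<Longrightarrow> curve_length g a b \<le> L"
  unfolding curve_length_eq_SUP by (rule SUP_least)

lemma subdivisions_bounds:
  assumes "t \<in> subdivisions a b" "z \<in> set t"
  shows "a \<le> z" "z \<le> b"
proof -
  have t: "t \<noteq> []" "sorted t" "hd t = a" "last t = b"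
    using assms(1) unfolding subdivisions_def by auto
  then show "a \<le> z"
    using assms(2) by (cases t) auto
  have "z \<le> last t"
    using t(2) assms(2) by (induction t rule: rev_induct) (auto simp: sorted_append)
  with t(4) show "z \<le> b"
    by simp
qed

lemma inscribed_length_cong:
  "(\<And>z. z \<in> set t \<Longrightarrow> g z = h z) \<Longrightarrow> inscribed_length g t = inscribed_length h t"
  by (induction g t rule: inscribed_length.induct) simp_all

lemma curve_length_cong:
  assumes "\<And>s. a \<le> s \<Longrightarrow> s \<le> b \<Longrightarrow> g s = h s"
  shows "curve_length g a b = curve_length h a b"
  unfolding curve_length_eq_SUP
  by (intro SUP_cong refl arg_cong[where f = ereal] inscribed_length_cong assms subdivisions_bounds)

lemma dist_le_curve_length:
  assumes "a \<le> b"
  shows "ereal (dist (g a) (g b)) \<le> curve_length g a b"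
proof -
  have "[a, b] \<in> subdivisions a b"
    using assms unfolding subdivisions_def by simp
  then show ?thesis
    using inscribed_length_le_curve_length[of "[a, b]" a b g] by simp
qed

lemma split_subdivision:
  "t \<noteq> [] \<Longrightarrow> sorted t \<Longrightarrow> hd t \<le> b \<Longrightarrow> b \<le> last t \<Longrightarrow>
   \<exists>t1 t2. t1 \<in> subdivisions (hd t) b \<and> t2 \<in> subdivisions b (last t) \<and>
     inscribed_length g t \<le> inscribed_length g t1 + inscribed_length g t2"
proof (induction g t rule: inscribed_length.induct)
  case (1 g x y ts)
  show ?case
  proof (cases "y \<le> b")
    case True
    then obtain t1 t2 where t12: "t1 \<in> subdivisions y b" "t2 \<in> subdivisions b (last (y # ts))"
      "inscribed_length g (y # ts) \<le> inscribed_length g t1 + inscribed_length g t2"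
      using "1.IH" "1.prems"(2,4) by auto
    then obtain t1' where "t1 = y # t1'"
      unfolding subdivisions_def by (cases t1) auto
    moreover have "x # t1 \<in> subdivisions x b"
      using t12(1) "1.prems"(2) subdivisions_bounds(1)[OF t12(1)] unfolding subdivisions_def
      by (auto intro: order_trans)
    ultimately show ?thesis
      using t12(2,3) by (intro exI[of _ "x # t1"] exI[of _ t2]) auto
  next
    case False
    have "[x, b] \<in> subdivisions x b" "b # y # ts \<in> subdivisions b (last (x # y # ts))"
      using False "1.prems"(2,3) unfolding subdivisions_def by auto
    moreover have "inscribed_length g (x # y # ts) \<le> inscribed_length g [x, b] + inscribed_length g (b # y # ts)"
      using dist_triangle[of "g x" "g y" "g b"] by simp
    ultimately show ?thesis
      by (intro exI[of _ "[x, b]"] exI[of _ "b # y # ts"]) simp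
  qed
next
  case ("2_2" g x)
  then show ?case
    by (intro exI[of _ "[x]"]) (auto simp: subdivisions_def)
qed simp

lemma curve_length_concat:
  assumes "a \<le> b" "b \<le> c"
  shows "curve_length g a c \<le> curve_length g a b + curve_length g b c"
proof (rule curve_length_least)
  fix t assume t: "t \<in> subdivisions a c"
  then have "t \<noteq> []" "sorted t" "hd t = a" "last t = c"
    unfolding subdivisions_def by auto
  then obtain t1 t2 where "t1 \<in> subdivisions a b" "t2 \<in> subdivisions b c"
    "inscribed_length g t \<le> inscribed_length g t1 + inscribed_length g t2"
    using split_subdivision[of t b g] assms by auto
  then have "ereal (inscribed_length g t) \<le> ereal (inscribed_length g t1) + ereal (inscribed_length g t2)"
    by simp
  also have "\<dots> \<le> curve_length g a b + curve_length g b c"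
    by (intro add_mono inscribed_length_le_curve_length) fact+
  finally show "ereal (inscribed_length g t) \<le> curve_length g a b + curve_length g b c" .
qed

lemma inscribed_length_Lipschitz:
  assumes "\<And>x y. x \<in> set t \<Longrightarrow> y \<in> set t \<Longrightarrow> x \<le> y \<Longrightarrow> dist (g x) (g y) \<le> K * (y - x)"
    and "t \<noteq> []" "sorted t"
  shows "inscribed_length g t \<le> K * (last t - hd t)"
  using assms
proof (induction g t rule: inscribed_length.induct)
  case (1 g x y ts)
  then have "inscribed_length g (y # ts) \<le> K * (last (y # ts) - y)"
    by simp
  moreover have "dist (g x) (g y) \<le> K * (y - x)"
    using "1.prems"(1,3) by simp
  ultimately show ?case
    by (simp add: algebra_simps)
qed simp_all

lemma curve_length_Lipschitz:
  assumes "\<And>x y. a \<le> x \<Longrightarrow> x \<le> y \<Longrightarrow> y \<le> b \<Longrightarrow> dist (g x) (g y) \<le> K * (y - x)"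
  shows "curve_length g a b \<le> ereal (K * (b - a))"
proof (rule curve_length_least)
  fix t assume t: "t \<in> subdivisions a b"
  have "inscribed_length g t \<le> K * (last t - hd t)"
    using t subdivisions_bounds[OF t] assms unfolding subdivisions_def
    by (intro inscribed_length_Lipschitz) auto
  with t show "ereal (inscribed_length g t) \<le> ereal (K * (b - a))"
    unfolding subdivisions_def by simp
qed

section \<open>Closed balls for the distance on X_f\<close>

lemma Xf_dist_le_curve_length:
  "a \<le> b \<Longrightarrow> continuous_map (top_of_set {a..b}) (Xf_top X f) \<gamma> \<Longrightarrow> \<gamma> a = p \<Longrightarrow> \<gamma> b = q \<Longrightarrow>
   Xf_dist X f p q \<le> curve_length (ftilde f \<circ> \<gamma>) a b"
  unfolding Xf_dist_def by (rule INF_lower2[of "(\<gamma>, a, b)"]) auto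

lemma Xf_dist_greatest:
  assumes "\<And>\<gamma> a b. a \<le> b \<Longrightarrow> continuous_map (top_of_set {a..b}) (Xf_top X f) \<gamma> \<Longrightarrow>
             \<gamma> a = p \<Longrightarrow> \<gamma> b = q \<Longrightarrow> L \<le> curve_length (ftilde f \<circ> \<gamma>) a b"
  shows "L \<le> Xf_dist X f p q"
  unfolding Xf_dist_def by (rule INF_greatest) (auto intro: assms)

lemma dist_le_Xf_dist:
  fixes f :: "'a \<Rightarrow> 'b::euclidean_space"
  assumes "x \<in> topspace X" "y \<in> topspace X"
  shows "ereal (dist (f x) (f y)) \<le> Xf_dist X f (fclass X f x) (fclass X f y)"
proof (rule Xf_dist_greatest)
  fix \<gamma> :: "real \<Rightarrow> 'a set" and a b :: real
  assume "a \<le> b" "\<gamma> a = fclass X f x" "\<gamma> b = fclass X f y"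
  then show "ereal (dist (f x) (f y)) \<le> curve_length (ftilde f \<circ> \<gamma>) a b"
    using dist_le_curve_length[of a b "ftilde f \<circ> \<gamma>"] by (simp add: ftilde_fclass assms)
qed

lemma Xf_dist_join:
  assumes "a \<le> b" "b \<le> c"
    and "continuous_map (top_of_set {a..b}) (Xf_top X f) \<gamma>1"
    and "continuous_map (top_of_set {b..c}) (Xf_top X f) \<gamma>2"
    and "\<gamma>1 a = p" "\<gamma>1 b = \<gamma>2 b" "\<gamma>2 c = r"
  shows "Xf_dist X f p r \<le> curve_length (ftilde f \<circ> \<gamma>1) a b + curve_length (ftilde f \<circ> \<gamma>2) b c"
proof -
  define \<gamma> where "\<gamma> s = (if s \<le> b then \<gamma>1 s else \<gamma>2 s)" for s
  have "{a..c} \<inter> {s. a \<le> s \<and> s \<le> c \<and> s \<le> b} = {a..b}"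
       "{a..c} \<inter> {s. a \<le> s \<and> s \<le> c \<and> b \<le> s} = {b..c}"
    using assms(1,2) by auto
  then have "continuous_map (top_of_set {a..c}) (Xf_top X f) \<gamma>"
    unfolding \<gamma>_def using assms(3,4,6)
    by (intro continuous_map_cases_le) (simp_all add: subtopology_subtopology)
  then have "Xf_dist X f p r \<le> curve_length (ftilde f \<circ> \<gamma>) a c"
    using assms(1,2,5-7) by (intro Xf_dist_le_curve_length) (auto simp: \<gamma>_def)
  also have "\<dots> \<le> curve_length (ftilde f \<circ> \<gamma>) a b + curve_length (ftilde f \<circ> \<gamma>) b c"
    using assms(1,2) by (rule curve_length_concat)
  also have "curve_length (ftilde f \<circ> \<gamma>) a b = curve_length (ftilde f \<circ> \<gamma>1) a b"
    by (rule curve_length_cong) (simp add: \<gamma>_def)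
  also have "curve_length (ftilde f \<circ> \<gamma>) b c = curve_length (ftilde f \<circ> \<gamma>2) b c"
    by (rule curve_length_cong) (use assms(6) in \<open>auto simp: \<gamma>_def\<close>)
  finally show ?thesis .
qed

(* Where (LFC) holds on U, fclass factors through f; Xf_section X f U is the factor map on f ` U. *)
definition Xf_section :: "'a topology \<Rightarrow> ('a \<Rightarrow> 'b) \<Rightarrow> 'a set \<Rightarrow> 'b \<Rightarrow> 'a set" where
  "Xf_section X f U y = fclass X f (SOME z. z \<in> U \<and> f z = y)"

lemma Xf_section_eq:
  assumes "LFC X f U" "U \<subseteq> topspace X" "z \<in> U"
  shows "Xf_section X f U (f z) = fclass X f z"
proof -
  have "\<exists>z'. z' \<in> U \<and> f z' = f z"
    using assms(3) by blast
  then have "(SOME z'. z' \<in> U \<and> f z' = f z) \<in> U \<and> f (SOME z'. z' \<in> U \<and> f z' = f z) = f z"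
    by (rule someI_ex)
  then show ?thesis
    unfolding Xf_section_def using fclass_eq_if_LFC[OF assms(1,2)] assms(3) by blast
qed

lemma continuous_map_Xf_section:
  assumes "openin X U" "LFC X f U" "f ` U \<subseteq> C" "open_map (subtopology X U) (top_of_set C) f"
  shows "continuous_map (top_of_set (f ` U)) (Xf_top X f) (Xf_section X f U)"
  unfolding continuous_map_openin_preimage_eq
proof (intro conjI allI impI)
  have U: "U \<subseteq> topspace X"
    using assms(1) by (rule openin_subset)
  show "Xf_section X f U \<in> topspace (top_of_set (f ` U)) \<rightarrow> topspace (Xf_top X f)"
    using Xf_section_eq[OF assms(2) U] U by (auto simp: topspace_Xf_top)
  fix V assume V: "openin (Xf_top X f) V"
  define W where "W = U \<inter> {x \<in> topspace X. fclass X f x \<in> V}"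
  have "topspace (top_of_set (f ` U)) \<inter> Xf_section X f U -` V = f ` W"
    using Xf_section_eq[OF assms(2) U] U unfolding W_def by auto
  moreover have "openin (top_of_set C) (f ` W)"
    using assms(4) V unfolding open_map_def openin_Xf_top W_def
    by (simp add: openin_subtopology_Int2)
  ultimately show "openin (top_of_set (f ` U)) (topspace (top_of_set (f ` U)) \<inter> Xf_section X f U -` V)"
    using assms(3) by (auto intro: openin_subset_trans simp: W_def)
qed

lemma Xf_dist_extend_by_segment:
  fixes f :: "'a \<Rightarrow> 'b::euclidean_space"
  assumes "openin X U" "LFC X f U" "f ` U \<subseteq> C" "open_map (subtopology X U) (top_of_set C) f"
    and "u \<in> U" "w \<in> U" "closed_segment (f u) (f w) \<subseteq> f ` U"
    and "a \<le> b" "continuous_map (top_of_set {a..b}) (Xf_top X f) \<gamma>" "\<gamma> a = p" "\<gamma> b = fclass X f u"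
  shows "Xf_dist X f p (fclass X f w) \<le> curve_length (ftilde f \<circ> \<gamma>) a b + ereal (dist (f u) (f w))"
proof -
  have UX: "U \<subseteq> topspace X"
    using assms(1) by (rule openin_subset)
  \<comment> \<open>the segment is parametrised over [b, b + 1] so that it continues \<gamma>\<close>
  define c where "c s = f u + (s - b) *\<^sub>R (f w - f u)" for s
  have "c s \<in> closed_segment (f u) (f w)" if "s \<in> {b..b+1}" for s
    using that unfolding in_segment c_def
    by (intro exI[of _ "s - b"]) (simp add: algebra_simps)
  then have c_in: "c s \<in> f ` U" if "s \<in> {b..b+1}" for s
    using that assms(7) by blast
  define \<gamma>2 where "\<gamma>2 = Xf_section X f U \<circ> c"
  have "continuous_map (top_of_set {b..b+1}) (top_of_set (f ` U)) c"
    using c_in unfolding c_def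
    by (intro continuous_map_into_subtopology) (auto intro!: continuous_intros)
  then have "continuous_map (top_of_set {b..b+1}) (Xf_top X f) \<gamma>2"
    unfolding \<gamma>2_def using continuous_map_Xf_section[OF assms(1-4)] by (rule continuous_map_compose)
  moreover have "\<gamma>2 b = fclass X f u" "\<gamma>2 (b + 1) = fclass X f w"
    unfolding \<gamma>2_def c_def using Xf_section_eq[OF assms(2) UX] assms(5,6) by simp_all
  ultimately have "Xf_dist X f p (fclass X f w)
      \<le> curve_length (ftilde f \<circ> \<gamma>) a b + curve_length (ftilde f \<circ> \<gamma>2) b (b + 1)"
    using assms(8-11) by (intro Xf_dist_join) auto
  also have "curve_length (ftilde f \<circ> \<gamma>2) b (b + 1) = curve_length c b (b + 1)"
  proof (rule curve_length_cong)
    fix s assume "b \<le> s" "s \<le> b + 1"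
    then obtain z where "z \<in> U" "c s = f z"
      using c_in by fastforce
    then show "(ftilde f \<circ> \<gamma>2) s = c s"
      unfolding \<gamma>2_def using Xf_section_eq[OF assms(2) UX] UX by (auto simp: ftilde_fclass)
  qed
  also have "curve_length c b (b + 1) \<le> ereal (dist (f u) (f w) * (b + 1 - b))"
  proof (rule curve_length_Lipschitz)
    fix x y :: real assume "x \<le> y"
    have "c x - c y = (x - y) *\<^sub>R (f w - f u)"
      unfolding c_def by (simp add: algebra_simps)
    with \<open>x \<le> y\<close> show "dist (c x) (c y) \<le> dist (f u) (f w) * (y - x)"
      by (simp add: dist_norm norm_minus_commute)
  qed
  finally show ?thesis
    by (simp add: add_left_mono o_def)
qed

lemma Xf_dist_fclass_le_by_segment:
  fixes f :: "'a \<Rightarrow> 'b::euclidean_space"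
  assumes "openin X U" "LFC X f U" "f ` U \<subseteq> C" "open_map (subtopology X U) (top_of_set C) f"
    and "u \<in> U" "w \<in> U" "closed_segment (f u) (f w) \<subseteq> f ` U"
  shows "Xf_dist X f p (fclass X f w) \<le> Xf_dist X f p (fclass X f u) + ereal (dist (f u) (f w))"
proof -
  have "Xf_dist X f p (fclass X f w) - ereal (dist (f u) (f w)) \<le> Xf_dist X f p (fclass X f u)"
  proof (rule Xf_dist_greatest)
    fix \<gamma> :: "real \<Rightarrow> 'a set" and a b :: real
    assume "a \<le> b" "continuous_map (top_of_set {a..b}) (Xf_top X f) \<gamma>"
      "\<gamma> a = p" "\<gamma> b = fclass X f u"
    then show "Xf_dist X f p (fclass X f w) - ereal (dist (f u) (f w)) \<le> curve_length (ftilde f \<circ> \<gamma>) a b"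
      using Xf_dist_extend_by_segment[OF assms] by (simp add: ereal_minus_le)
  qed
  then show ?thesis
    by (simp add: ereal_minus_le)
qed

lemma Xf_dist_fclass_le_near:
  fixes f :: "'a \<Rightarrow> 'b::euclidean_space"
  assumes "local_convexity_data X f" "locally_fiber_connected X f" "continuous_map X euclidean f"
    and "w \<in> topspace X"
  shows "\<exists>N. openin X N \<and> w \<in> N \<and> (\<forall>u\<in>N. \<forall>p.
           Xf_dist X f p (fclass X f w) \<le> Xf_dist X f p (fclass X f u) + ereal (dist (f u) (f w)))"
proof -
  obtain U C where U: "openin X U" "w \<in> U" "LFC X f U" "convex C" "f ` U \<subseteq> C"
      "nbhd_in (top_of_set C) (f w) (f ` U)" "open_map (subtopology X U) (top_of_set C) f"
    using local_convexity_LFC_chartE[OF assms(1,2,4)] by metis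
  obtain T where T: "open T" "f w \<in> T" "C \<inter> T \<subseteq> f ` U"
    using U(6) unfolding nbhd_in_def openin_open by blast
  obtain e where e: "e > 0" "ball (f w) e \<subseteq> T"
    using T(1,2) open_contains_ball by blast
  define N where "N = U \<inter> {z \<in> topspace X. f z \<in> ball (f w) e}"
  have "openin X N"
    unfolding N_def using U(1) assms(3) by (intro openin_Int openin_continuous_map_preimage) auto
  moreover have "w \<in> N"
    using U(2) assms(4) e(1) unfolding N_def by simp
  moreover have "Xf_dist X f p (fclass X f w) \<le> Xf_dist X f p (fclass X f u) + ereal (dist (f u) (f w))"
    if "u \<in> N" for u p
  proof -
    have u: "u \<in> U" "f u \<in> ball (f w) e"
      using that unfolding N_def by auto
    have "closed_segment (f u) (f w) \<subseteq> C \<inter> ball (f w) e"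
      using u U(2,4,5) e(1) by (intro closed_segment_subset) (auto intro: convex_Int)
    then have "closed_segment (f u) (f w) \<subseteq> f ` U"
      using e(2) T(3) by blast
    then show ?thesis
      by (rule Xf_dist_fclass_le_by_segment[OF U(1,3,5,7) u(1) U(2)])
  qed
  ultimately show ?thesis
    by blast
qed

lemma openin_Xf_dist_fclass_gt:
  fixes f :: "'a \<Rightarrow> 'b::euclidean_space"
  assumes "local_convexity_data X f" "locally_fiber_connected X f" "continuous_map X euclidean f"
  shows "openin X {z \<in> topspace X. ereal r < Xf_dist X f p (fclass X f z)}" (is "openin X ?W")
proof (subst openin_subopen, intro ballI)
  fix w assume w: "w \<in> ?W"
  then obtain s where s: "ereal r < ereal s" "ereal s < Xf_dist X f p (fclass X f w)"
    using ereal_dense2 by blast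
  from w have "w \<in> topspace X"
    by simp
  then obtain N where N: "openin X N" "w \<in> N" and near: "\<forall>u\<in>N. \<forall>p.
      Xf_dist X f p (fclass X f w) \<le> Xf_dist X f p (fclass X f u) + ereal (dist (f u) (f w))"
    using Xf_dist_fclass_le_near[OF assms] by blast
  define N' where "N' = N \<inter> {z \<in> topspace X. f z \<in> ball (f w) (s - r)}"
  have "openin X N'"
    unfolding N'_def using N(1) assms(3) by (intro openin_Int openin_continuous_map_preimage) auto
  moreover have "w \<in> N'"
    using N(2) w s(1) unfolding N'_def by simp
  moreover have "N' \<subseteq> ?W"
  proof
    fix u assume u: "u \<in> N'"
    have "ereal r < Xf_dist X f p (fclass X f u)"
    proof (rule ccontr)
      assume "\<not> ereal r < Xf_dist X f p (fclass X f u)"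
      then have "Xf_dist X f p (fclass X f w) \<le> ereal r + ereal (dist (f u) (f w))"
        using near u unfolding N'_def by (meson add_right_mono not_less order_trans IntD1)
      also have "\<dots> < ereal s"
        using u unfolding N'_def by (simp add: dist_commute)
      finally show False
        using s(2) by simp
    qed
    then show "u \<in> ?W"
      using u unfolding N'_def by blast
  qed
  ultimately show "\<exists>T. openin X T \<and> w \<in> T \<and> T \<subseteq> ?W"
    by blast
qed

lemma closedin_Xf_dist_le:
  fixes f :: "'a \<Rightarrow> 'b::euclidean_space"
  assumes "local_convexity_data X f" "locally_fiber_connected X f" "continuous_map X euclidean f"
  shows "closedin (Xf_top X f) {q \<in> topspace (Xf_top X f). Xf_dist X f p q \<le> ereal r}"
proof -
  have "{z \<in> topspace X. fclass X f z \<in> topspace (Xf_top X f) - {q \<in> topspace (Xf_top X f). Xf_dist X f p q \<le> ereal r}}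
      = {z \<in> topspace X. ereal r < Xf_dist X f p (fclass X f z)}"
    unfolding topspace_Xf_top by auto
  then show ?thesis
    using openin_Xf_dist_fclass_gt[OF assms]
    unfolding closedin_def openin_Xf_top topspace_Xf_top by auto
qed

lemma compactin_Xf_dist_le:
  fixes f :: "'a \<Rightarrow> 'b::euclidean_space"
  assumes "proper_map (Xf_top X f) euclidean (ftilde f)"
    and "local_convexity_data X f" "locally_fiber_connected X f" "continuous_map X euclidean f"
    and "x \<in> topspace X"
  shows "compactin (Xf_top X f) {q \<in> topspace (Xf_top X f). Xf_dist X f (fclass X f x) q \<le> ereal r}"
    (is "compactin _ ?B")
proof -
  let ?K = "{q \<in> topspace (Xf_top X f). ftilde f q \<in> cball (f x) r}"
  have "?B \<subseteq> ?K"
  proof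
    fix q assume q: "q \<in> ?B"
    then obtain y where y: "y \<in> topspace X" "q = fclass X f y"
      unfolding topspace_Xf_top by blast
    have "ereal (dist (f x) (f y)) \<le> ereal r"
      using dist_le_Xf_dist[OF assms(5) y(1)] q y(2) by (blast intro: order_trans)
    with q y show "q \<in> ?K"
      by (simp add: ftilde_fclass)
  qed
  moreover have "compactin (Xf_top X f) ?K"
    using assms(1) unfolding proper_map_alt by (simp del: mem_cball)
  then have "compactin (Xf_top X f) (?B \<inter> ?K)"
    by (rule closed_Int_compactin[OF closedin_Xf_dist_le[OF assms(2-4)]])
  ultimately show ?thesis
    by (simp add: Int_absorb2)
qed

theorem proposition2p26:
  fixes X :: "'a topology" and f :: "'a \<Rightarrow> 'b::euclidean_space"
  assumes "connected_space X" and "locally_connected_space X" and "Hausdorff_space X"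
    and "normal_space X" and "first_countable X"
    and "continuous_map X euclidean f" and "closed_map X euclidean f"
    and "local_convexity_data X f" and "locally_fiber_connected X f"
  shows "continuous_map (Xf_top X f) euclidean (ftilde f)
         \<and> proper_map (Xf_top X f) euclidean (ftilde f)
         \<and> (\<forall>x\<in>topspace X. \<forall>r>0.
              compactin (Xf_top X f)
                {q \<in> topspace (Xf_top X f). Xf_dist X f (fclass X f x) q \<le> ereal r})"
proof -
  have proper: "proper_map (Xf_top X f) euclidean (ftilde f)"
    using assms(1,3,4,6-9) by (rule proper_map_ftilde)
  then show ?thesis
    using continuous_map_ftilde[OF assms(6)] compactin_Xf_dist_le[OF proper assms(8,9,6)] by blast
qed

end
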